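(* Let $(M,f,g)$ be an $(m,n)$-hypermodule over a commutative Krasner $(m,n)$-hyperring $(R,f',g')$ with scalar identity $1$, let $N\subseteq Q$ be proper subhypermodules of $M$, and let $\phi:\mathcal{SH}(M)\to\mathcal{SH}(M)\cup\{\varnothing\}$ be a function. If $Q$ is an $n$-ary $\phi$-classical prime subhypermodule of $M$, then $Q/N$ is an $n$-ary $\phi_N$-classical prime subhypermodule of $M/N$.
   Context: A commutative Krasner $(m,n)$-hyperring with scalar identity $1$ is a triple $(R,f',g')$ where $(R,f')$ is a canonical $m$-ary hypergroup with zero $0$, $(R,g')$ is a commutative $n$-ary semigroup, $g'$ is distributive over $f'$, $0$ is a zero element for $g'$, and $g'(x,1^{(n-1)})=x$. Notation: $x_i^j$ denotes $x_i,\dots,x_j$ and $x^{(k)}$ denotes $x$ repeated $k$ times. An $(m,n)$-hypermodule over $R$ is a triple $(M,f,g)$ with $(M,f)$ a canonical $m$-ary hypergroup with zero $0$ and $g:R^{n-1}\times M\to P^*(M)$ satisfying: $g(r_1^{n-1},f(x_1^m))=f(g(r_1^{n-1},x_1),\dots,g(r_1^{n-1},x_m))$; $g(r_1^{i-1},f'(s_1^m),r_{i+1}^{n-1},x)=f(g(r_1^{i-1},s_1,r_{i+1}^{n-1},x),\dots,g(r_1^{i-1},s_m,r_{i+1}^{n-1},x))$; $g(r_1^{i-1},g'(r_i^{i+n-1}),r_{i+n}^{2n-2},x)=g(r_1^{n-1},g(r_n^{2n-2},x))$; $g(r_1^{i-1},0,r_{i+1}^{n-1},x)=\{0\}$; moreover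 $g(1^{(n-1)},a)=\{a\}$. Operations on subsets are unions over elements. A subhypermodule is a nonempty $N\subseteq M$ with $(N,f)$ an $m$-ary subhypergroup and $g(R^{(n-1)},N)\subseteq N$; $\mathcal{SH}(M)$ denotes the set of subhypermodules of $M$. Given $\phi:\mathcal{SH}(M)\to\mathcal{SH}(M)\cup\{\varnothing\}$, a proper subhypermodule $Q$ is $n$-ary $\phi$-classical prime if for $r_1^{n-1}\in R$, $a\in M$, $g(r_1^{n-1},a)\subseteq Q\setminus\phi(Q)$ implies $g(r_i,1^{(n-2)},a)\subseteq Q$ for some $1\le i\le n-1$ (the same definition applies to any $(m,n)$-hypermodule and function on its subhypermodules). The quotient $M/N=\{f(a,N,0^{(m-2)}):a\in M\}$ is an $(m,n)$-hypermodule with $F(f(a_1,N,0^{(m-2)}),\dots,f(a_m,N,0^{(m-2)}))=\{f(t,N,0^{(m-2)}):t\in f(a_1^m)\}$ and $G(r_1^{n-1},f(a,N,0^{(m-2)}))=\{f(z,N,0^{(m-2)}):z\in g(r_1^{n-1},a)\}$; for a subhypermodule $K\supseteq N$, $K/N=\{f(a,N,0^{(m-2)}):a\in K\}$, and every subhypermodule of $M/N$ has this form. Define $\phi_N:\mathcal{SH}(M/N)\to\mathcal{SH}(M/N)\cup\{\varnothing\}$ by $\phi_N(K/N)=f(\phi(K),N,0^{(m-2)})/N$ for subhypermodules $K\supseteq N$, and $\phi_N(K/N)=\varnothing$ if $\phi(K)=\varnothing$. *)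

theory Defs
  imports Main "HOL-Library.Multiset"
begin

text \<open>An m-ary hyperoperation on a carrier is modelled as a function from lists
(of length m) to sets. Operations on subsets are unions over elements.\<close>

definition lift :: "('a list \<Rightarrow> 'b set) \<Rightarrow> 'a set list \<Rightarrow> 'b set" where
  "lift f Xs = \<Union>{f ys | ys. list_all2 (\<lambda>y X. y \<in> X) ys Xs}"

definition sing :: "'a list \<Rightarrow> 'a set list" where
  "sing xs = map (\<lambda>x. {x}) xs"

definition hinv :: "nat \<Rightarrow> 'a set \<Rightarrow> ('a list \<Rightarrow> 'a set) \<Rightarrow> 'a \<Rightarrow> 'a \<Rightarrow> 'a" where
  "hinv m H f e x = (THE y. y \<in> H \<and> e \<in> f (x # y # replicate (m - 2) e))"

definition canonical_hypergroup :: "nat \<Rightarrow> 'a set \<Rightarrow> ('a list \<Rightarrow> 'a set) \<Rightarrow> 'a \<Rightarrow> bool" where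
  "canonical_hypergroup m H f e \<longleftrightarrow>
     2 \<le> m \<and> e \<in> H
   \<and> (\<forall>xs. length xs = m \<and> set xs \<subseteq> H \<longrightarrow> f xs \<noteq> {} \<and> f xs \<subseteq> H)
   \<and> (\<forall>xs i. length xs = 2 * m - 1 \<and> set xs \<subseteq> H \<and> i < m \<longrightarrow>
        lift f (sing (take i xs) @ [f (take m (drop i xs))] @ sing (drop (i + m) xs))
        = lift f (sing (take (m - 1) xs) @ [f (drop (m - 1) xs)]))
   \<and> (\<forall>xs i. length xs = m \<and> set xs \<subseteq> H \<and> i < m \<longrightarrow> lift f ((sing xs)[i := H]) = H)
   \<and> (\<forall>xs ys. length xs = m \<and> set xs \<subseteq> H \<and> mset ys = mset xs \<longrightarrow> f ys = f xs)
   \<and> (\<forall>x\<in>H. f (x # replicate (m - 1) e) = {x})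
   \<and> (\<forall>e'\<in>H. (\<forall>x\<in>H. f (x # replicate (m - 1) e') = {x}) \<longrightarrow> e' = e)
   \<and> (\<forall>x\<in>H. \<exists>!y. y \<in> H \<and> e \<in> f (x # y # replicate (m - 2) e))
   \<and> (\<forall>xs x i. length xs = m \<and> set xs \<subseteq> H \<and> x \<in> H \<and> x \<in> f xs \<and> i < m \<longrightarrow>
        xs ! i \<in> f (map (hinv m H f e) (rev (take i xs)) @ [x]
                      @ map (hinv m H f e) (rev (drop (Suc i) xs))))"

definition krasner_hyperring ::
  "nat \<Rightarrow> nat \<Rightarrow> 'r set \<Rightarrow> ('r list \<Rightarrow> 'r set) \<Rightarrow> ('r list \<Rightarrow> 'r) \<Rightarrow> 'r \<Rightarrow> 'r \<Rightarrow> bool" where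
  "krasner_hyperring m n R f' g' z one \<longleftrightarrow>
     canonical_hypergroup m R f' z \<and> 2 \<le> n \<and> one \<in> R
   \<and> (\<forall>xs. length xs = n \<and> set xs \<subseteq> R \<longrightarrow> g' xs \<in> R)
   \<and> (\<forall>xs i. length xs = 2 * n - 1 \<and> set xs \<subseteq> R \<and> i < n \<longrightarrow>
        g' (take i xs @ [g' (take n (drop i xs))] @ drop (i + n) xs)
        = g' (take (n - 1) xs @ [g' (drop (n - 1) xs)]))
   \<and> (\<forall>xs ys. length xs = n \<and> set xs \<subseteq> R \<and> mset ys = mset xs \<longrightarrow> g' ys = g' xs)
   \<and> (\<forall>xs ys i. length xs = n \<and> set xs \<subseteq> R \<and> length ys = m \<and> set ys \<subseteq> R \<and> i < n \<longrightarrow>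
        (\<lambda>y. g' (xs[i := y])) ` f' ys = f' (map (\<lambda>y. g' (xs[i := y])) ys))
   \<and> (\<forall>xs i. length xs = n \<and> set xs \<subseteq> R \<and> i < n \<longrightarrow> g' (xs[i := z]) = z)
   \<and> (\<forall>x\<in>R. g' (x # replicate (n - 1) one) = x)"

definition hypermodule ::
  "nat \<Rightarrow> nat \<Rightarrow> 'r set \<Rightarrow> ('r list \<Rightarrow> 'r set) \<Rightarrow> ('r list \<Rightarrow> 'r) \<Rightarrow> 'r \<Rightarrow> 'r
   \<Rightarrow> 'a set \<Rightarrow> ('a list \<Rightarrow> 'a set) \<Rightarrow> ('r list \<Rightarrow> 'a \<Rightarrow> 'a set) \<Rightarrow> 'a \<Rightarrow> bool" where
  "hypermodule m n R f' g' z' one M f g z \<longleftrightarrow>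
     krasner_hyperring m n R f' g' z' one
   \<and> canonical_hypergroup m M f z
   \<and> (\<forall>rs x. length rs = n - 1 \<and> set rs \<subseteq> R \<and> x \<in> M \<longrightarrow> g rs x \<noteq> {} \<and> g rs x \<subseteq> M)
   \<and> (\<forall>rs xs. length rs = n - 1 \<and> set rs \<subseteq> R \<and> length xs = m \<and> set xs \<subseteq> M \<longrightarrow>
        \<Union>(g rs ` f xs) = lift f (map (g rs) xs))
   \<and> (\<forall>rs ss x i. length rs = n - 1 \<and> set rs \<subseteq> R \<and> length ss = m \<and> set ss \<subseteq> R
        \<and> x \<in> M \<and> i < n - 1 \<longrightarrow>
        \<Union>((\<lambda>s. g (rs[i := s]) x) ` f' ss) = lift f (map (\<lambda>s. g (rs[i := s]) x) ss))
   \<and> (\<forall>rs x i. length rs = 2 * n - 2 \<and> set rs \<subseteq> R \<and> x \<in> M \<and> i < n - 1 \<longrightarrow>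
        g (take i rs @ [g' (take n (drop i rs))] @ drop (i + n) rs) x
        = \<Union>(g (take (n - 1) rs) ` g (drop (n - 1) rs) x))
   \<and> (\<forall>rs x i. length rs = n - 1 \<and> set rs \<subseteq> R \<and> x \<in> M \<and> i < n - 1 \<longrightarrow>
        g (rs[i := z']) x = {z})
   \<and> (\<forall>a\<in>M. g (replicate (n - 1) one) a = {a})"

definition subhypergroup :: "nat \<Rightarrow> 'a set \<Rightarrow> ('a list \<Rightarrow> 'a set) \<Rightarrow> 'a set \<Rightarrow> bool" where
  "subhypergroup m H f N \<longleftrightarrow>
     N \<noteq> {} \<and> N \<subseteq> H
   \<and> (\<forall>xs. length xs = m \<and> set xs \<subseteq> N \<longrightarrow> f xs \<subseteq> N)
   \<and> (\<forall>xs i. length xs = m \<and> set xs \<subseteq> N \<and> i < m \<longrightarrow> lift f ((sing xs)[i := N]) = N)"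

definition subhypermodule ::
  "nat \<Rightarrow> nat \<Rightarrow> 'r set \<Rightarrow> 'a set \<Rightarrow> ('a list \<Rightarrow> 'a set) \<Rightarrow> ('r list \<Rightarrow> 'a \<Rightarrow> 'a set) \<Rightarrow> 'a set \<Rightarrow> bool" where
  "subhypermodule m n R M f g N \<longleftrightarrow>
     subhypergroup m M f N
   \<and> (\<forall>rs x. length rs = n - 1 \<and> set rs \<subseteq> R \<and> x \<in> N \<longrightarrow> g rs x \<subseteq> N)"

definition classical_prime ::
  "nat \<Rightarrow> nat \<Rightarrow> 'r set \<Rightarrow> 'r \<Rightarrow> 'a set \<Rightarrow> ('a list \<Rightarrow> 'a set) \<Rightarrow> ('r list \<Rightarrow> 'a \<Rightarrow> 'a set)
   \<Rightarrow> ('a set \<Rightarrow> 'a set) \<Rightarrow> 'a set \<Rightarrow> bool" where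
  "classical_prime m n R one M f g phi Q \<longleftrightarrow>
     subhypermodule m n R M f g Q \<and> Q \<noteq> M
   \<and> (\<forall>rs a. length rs = n - 1 \<and> set rs \<subseteq> R \<and> a \<in> M \<and> g rs a \<subseteq> Q - phi Q \<longrightarrow>
        (\<exists>i < n - 1. g (rs ! i # replicate (n - 2) one) a \<subseteq> Q))"

definition coset :: "nat \<Rightarrow> ('a list \<Rightarrow> 'a set) \<Rightarrow> 'a \<Rightarrow> 'a set \<Rightarrow> 'a \<Rightarrow> 'a set" where
  "coset m f z N a = lift f ([{a}, N] @ replicate (m - 2) {z})"

definition quot :: "nat \<Rightarrow> ('a list \<Rightarrow> 'a set) \<Rightarrow> 'a \<Rightarrow> 'a set \<Rightarrow> 'a set \<Rightarrow> 'a set set" where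
  "quot m f z N K = coset m f z N ` K"

definition quotF :: "nat \<Rightarrow> ('a list \<Rightarrow> 'a set) \<Rightarrow> 'a \<Rightarrow> 'a set \<Rightarrow> 'a set
    \<Rightarrow> 'a set list \<Rightarrow> 'a set set" where
  "quotF m f z N M Xs = {coset m f z N t | t as.
      list_all2 (\<lambda>a X. a \<in> M \<and> X = coset m f z N a) as Xs \<and> t \<in> f as}"

definition quotG :: "nat \<Rightarrow> ('a list \<Rightarrow> 'a set) \<Rightarrow> 'a \<Rightarrow> 'a set \<Rightarrow> 'a set
    \<Rightarrow> ('r list \<Rightarrow> 'a \<Rightarrow> 'a set) \<Rightarrow> 'r list \<Rightarrow> 'a set \<Rightarrow> 'a set set" where
  "quotG m f z N M g rs X = {coset m f z N w | w a.
      a \<in> M \<and> X = coset m f z N a \<and> w \<in> g rs a}"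

text \<open>phi_N(K/N) = f(phi(K),N,0^(m-2))/N, and the empty set if phi(K) is empty.
  For a subhypermodule K containing N, K is recovered from K/N as the union of its cosets.\<close>
definition phiN :: "nat \<Rightarrow> ('a list \<Rightarrow> 'a set) \<Rightarrow> 'a \<Rightarrow> 'a set \<Rightarrow> ('a set \<Rightarrow> 'a set)
    \<Rightarrow> 'a set set \<Rightarrow> 'a set set" where
  "phiN m f z N phi X =
     (if phi (\<Union>X) = {} then {}
      else quot m f z N (lift f ([phi (\<Union>X), N] @ replicate (m - 2) {z})))"

end

theory Submission
  imports Defs
begin

text \<open>For a subhypermodule K containing N, the coset f(a,N,0,\<dots>,0) of a \<in> M contains a and
  is contained in K when a \<in> K. Hence the coset of a lies in K/N iff a \<in> K, and K is the union
  of K/N. Since g distributes over f, scalars that send a into K send every element of its coset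
  into K, so G(r, f(a,N,0,\<dots>,0)) \<subseteq> K/N iff g(r, a) \<subseteq> K for every tuple r of scalars.
  As moreover \<phi>_N(Q/N) contains the coset of every element of \<phi>(Q), the classical prime condition
  for Q/N reduces to the one for Q.\<close>

lemma mem_lift_iff:
  "x \<in> lift f Xs \<longleftrightarrow> (\<exists>ys. list_all2 (\<lambda>y X. y \<in> X) ys Xs \<and> x \<in> f ys)"
  unfolding lift_def by blast

lemma list_all2_set_subset:
  assumes "list_all2 P xs ys" and "\<And>x y. P x y \<Longrightarrow> y \<in> set ys \<Longrightarrow> x \<in> K"
  shows "set xs \<subseteq> K"
  using assms by (induction rule: list_all2_induct) auto

lemma lift_subset_closed:
  assumes closed: "\<And>ys. length ys = length Xs \<Longrightarrow> set ys \<subseteq> K \<Longrightarrow> f ys \<subseteq> K"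
    and "\<forall>X\<in>set Xs. X \<subseteq> K"
  shows "lift f Xs \<subseteq> K"
proof
  fix x assume "x \<in> lift f Xs"
  then obtain ys where ys: "list_all2 (\<lambda>y X. y \<in> X) ys Xs" and x: "x \<in> f ys"
    unfolding mem_lift_iff by blast
  have "set ys \<subseteq> K"
    using list_all2_set_subset[OF ys] assms(2) by blast
  with closed[OF list_all2_lengthD[OF ys]] x show "x \<in> K" by blast
qed

lemma canonical_hypergroup_mem_lift_coset:
  assumes "canonical_hypergroup m M f z" and "a \<in> A" "a \<in> M" "z \<in> N"
  shows "a \<in> lift f ([A, N] @ replicate (m - 2) {z})"
proof -
  have "2 \<le> m" and "f (a # replicate (m - 1) z) = {a}"
    using assms(1,3) unfolding canonical_hypergroup_def by auto
  moreover have "replicate (m - 1) z = z # replicate (m - 2) z" if "2 \<le> m"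
    using that by (simp add: Suc_diff_Suc numeral_2_eq_2 flip: replicate_Suc)
  ultimately have "f (a # z # replicate (m - 2) z) = {a}" by simp
  moreover have "list_all2 (\<lambda>y X. y \<in> X) (replicate (m - 2) z) (replicate (m - 2) {z})"
    by (simp add: list_all2_conv_all_nth)
  then have "list_all2 (\<lambda>y X. y \<in> X) (a # z # replicate (m - 2) z) ([A, N] @ replicate (m - 2) {z})"
    using assms(2,4) by simp
  ultimately show ?thesis unfolding mem_lift_iff by blast
qed

lemma image_coset_lift_subset:
  assumes "\<forall>X\<in>set Xs. X \<subseteq> M"
  shows "coset m f z N ` lift f Xs \<subseteq> lift (quotF m f z N M) (map ((`) (coset m f z N)) Xs)"
proof
  fix Y assume "Y \<in> coset m f z N ` lift f Xs"
  then obtain t where Y: "Y = coset m f z N t" and "t \<in> lift f Xs"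
    by blast
  then obtain ys where t: "t \<in> f ys" and ys: "list_all2 (\<lambda>y X. y \<in> X) ys Xs"
    unfolding mem_lift_iff by blast
  have "set ys \<subseteq> M"
    using list_all2_set_subset[OF ys] assms by blast
  then have "list_all2 (\<lambda>a X. a \<in> M \<and> X = coset m f z N a) ys (map (coset m f z N) ys)"
    unfolding list_all2_map2 list_all2_same by blast
  with t Y have "Y \<in> quotF m f z N M (map (coset m f z N) ys)"
    unfolding quotF_def by blast
  moreover have "list_all2 (\<lambda>y X. y \<in> X) (map (coset m f z N) ys) (map ((`) (coset m f z N)) Xs)"
    unfolding list_all2_map1 list_all2_map2 using ys by (rule list_all2_mono) blast
  ultimately show "Y \<in> lift (quotF m f z N M) (map ((`) (coset m f z N)) Xs)"
    unfolding mem_lift_iff by blast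
qed

locale mn_hypermodule =
  fixes m n :: nat and R :: "'r set" and f' :: "'r list \<Rightarrow> 'r set" and g' :: "'r list \<Rightarrow> 'r"
    and z' one :: 'r and M :: "'a set" and f :: "'a list \<Rightarrow> 'a set"
    and g :: "'r list \<Rightarrow> 'a \<Rightarrow> 'a set" and z :: 'a
  assumes hypermodule: "hypermodule m n R f' g' z' one M f g z"
begin

lemma krasner_hyperring: "krasner_hyperring m n R f' g' z' one"
  and canonical_hypergroup: "canonical_hypergroup m M f z"
  using hypermodule unfolding hypermodule_def by blast+

lemma arity_ge_2: "2 \<le> m" "2 \<le> n"
  using canonical_hypergroup krasner_hyperring
  unfolding canonical_hypergroup_def krasner_hyperring_def by blast+

lemma one_mem: "one \<in> R" and zero_scalar_mem: "z' \<in> R"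
  using krasner_hyperring unfolding krasner_hyperring_def canonical_hypergroup_def by blast+

lemma smult_closed:
  "length rs = n - 1 \<Longrightarrow> set rs \<subseteq> R \<Longrightarrow> x \<in> M \<Longrightarrow> g rs x \<subseteq> M"
  using hypermodule unfolding hypermodule_def by simp

lemma smult_distrib:
  "length rs = n - 1 \<Longrightarrow> set rs \<subseteq> R \<Longrightarrow> length xs = m \<Longrightarrow> set xs \<subseteq> M \<Longrightarrow>
    \<Union>(g rs ` f xs) = lift f (map (g rs) xs)"
  using hypermodule unfolding hypermodule_def by simp

lemma smult_zero_scalar:
  "length rs = n - 1 \<Longrightarrow> set rs \<subseteq> R \<Longrightarrow> x \<in> M \<Longrightarrow> i < n - 1 \<Longrightarrow> g (rs[i := z']) x = {z}"
  using hypermodule unfolding hypermodule_def by simp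

lemma subhypermodule_zero_mem:
  assumes K: "subhypermodule m n R M f g K"
  shows "z \<in> K"
proof -
  obtain x where x: "x \<in> K" "x \<in> M"
    using K unfolding subhypermodule_def subhypergroup_def by blast
  let ?zeros = "replicate (n - 1) z'"
  have zeros: "length ?zeros = n - 1" "set ?zeros \<subseteq> R" "?zeros[0 := z'] = ?zeros"
    using zero_scalar_mem arity_ge_2 by (auto simp: list_update_same_conv)
  then have "g ?zeros x = {z}"
    using smult_zero_scalar[of ?zeros x 0] x(2) arity_ge_2 by simp
  moreover have "g ?zeros x \<subseteq> K"
    using K x(1) zeros unfolding subhypermodule_def by blast
  ultimately show ?thesis by simp
qed

end

locale mn_hypermodule_quotient = mn_hypermodule +
  fixes N :: "'a set"
  assumes subhypermodule_N: "subhypermodule m n R M f g N"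
begin

lemma zero_mem_N: "z \<in> N" and N_subset: "N \<subseteq> M"
  using subhypermodule_zero_mem[OF subhypermodule_N] subhypermodule_N
  unfolding subhypermodule_def subhypergroup_def by blast+

lemma mem_coset_self: "a \<in> M \<Longrightarrow> a \<in> coset m f z N a"
  unfolding coset_def
  using canonical_hypergroup_mem_lift_coset[OF canonical_hypergroup _ _ zero_mem_N] by blast

context
  fixes K :: "'a set"
  assumes K: "subhypermodule m n R M f g K" and N_subset_K: "N \<subseteq> K"
begin

lemma K_subset_M: "K \<subseteq> M"
  using K unfolding subhypermodule_def subhypergroup_def by blast

lemma hyperop_closed_K: "length xs = m \<Longrightarrow> set xs \<subseteq> K \<Longrightarrow> f xs \<subseteq> K"
  using K unfolding subhypermodule_def subhypergroup_def by blast

lemma hyperop_reproductive_K: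
  "length xs = m \<Longrightarrow> set xs \<subseteq> K \<Longrightarrow> i < m \<Longrightarrow> lift f ((sing xs)[i := K]) = K"
  using K unfolding subhypermodule_def subhypergroup_def by blast

lemma smult_closed_K: "length rs = n - 1 \<Longrightarrow> set rs \<subseteq> R \<Longrightarrow> x \<in> K \<Longrightarrow> g rs x \<subseteq> K"
  using K unfolding subhypermodule_def by blast

lemma coset_subset: "q \<in> K \<Longrightarrow> coset m f z N q \<subseteq> K"
  unfolding coset_def
proof (rule lift_subset_closed)
  show "length ys = length ([{q}, N] @ replicate (m - 2) {z}) \<Longrightarrow> set ys \<subseteq> K \<Longrightarrow> f ys \<subseteq> K" for ys
    using arity_ge_2 hyperop_closed_K by simp
  show "q \<in> K \<Longrightarrow> \<forall>X\<in>set ([{q}, N] @ replicate (m - 2) {z}). X \<subseteq> K"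
    using subhypermodule_zero_mem[OF K] N_subset_K by simp
qed

lemma mem_of_coset_mem_quot:
  assumes "a \<in> M" and "coset m f z N a \<in> quot m f z N K"
  shows "a \<in> K"
proof -
  obtain q where "q \<in> K" and same_coset: "coset m f z N a = coset m f z N q"
    using assms(2) unfolding quot_def by blast
  have "a \<in> coset m f z N q"
    using mem_coset_self[OF assms(1)] unfolding same_coset .
  with coset_subset[OF \<open>q \<in> K\<close>] show ?thesis by blast
qed

lemma Union_quot: "\<Union>(quot m f z N K) = K"
proof
  show "\<Union>(quot m f z N K) \<subseteq> K"
    using coset_subset unfolding quot_def by auto
  show "K \<subseteq> \<Union>(quot m f z N K)"
  proof
    fix x assume "x \<in> K"
    then have "x \<in> coset m f z N x" and "coset m f z N x \<in> quot m f z N K"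
      using mem_coset_self K_subset_M unfolding quot_def by auto
    then show "x \<in> \<Union>(quot m f z N K)" by blast
  qed
qed

lemma quot_neq_quot_carrier:
  assumes "K \<noteq> M" shows "quot m f z N K \<noteq> quot m f z N M"
proof
  assume quot_eq: "quot m f z N K = quot m f z N M"
  obtain b where b: "b \<in> M" "b \<notin> K"
    using assms K_subset_M by blast
  then have "coset m f z N b \<in> quot m f z N K"
    unfolding quot_eq by (simp add: quot_def)
  from mem_of_coset_mem_quot[OF b(1) this] b(2) show False by contradiction
qed

lemma smult_subset_of_mem_coset:
  assumes rs: "length rs = n - 1" "set rs \<subseteq> R"
    and a: "a \<in> M" "g rs a \<subseteq> K" and a': "a' \<in> coset m f z N a"
  shows "g rs a' \<subseteq> K"
proof -
  obtain ys where ys: "list_all2 (\<lambda>y X. y \<in> X) ys ([{a}, N] @ replicate (m - 2) {z})"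
    and "a' \<in> f ys"
    using a' unfolding coset_def mem_lift_iff by blast
  have ys_set: "set ys \<subseteq> insert a N" and ys_len: "length ys = m"
    using list_all2_set_subset[OF ys, of "insert a N"] list_all2_lengthD[OF ys] zero_mem_N arity_ge_2
    by auto
  then have "g rs a' \<subseteq> lift f (map (g rs) ys)"
    using smult_distrib[OF rs ys_len] \<open>a' \<in> f ys\<close> a(1) N_subset by blast
  also have "\<dots> \<subseteq> K"
  proof (rule lift_subset_closed)
    show "length ws = length (map (g rs) ys) \<Longrightarrow> set ws \<subseteq> K \<Longrightarrow> f ws \<subseteq> K" for ws
      using ys_len hyperop_closed_K by simp
    show "\<forall>X\<in>set (map (g rs) ys). X \<subseteq> K"
      using ys_set a(2) smult_closed_K[OF rs] N_subset_K by auto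
  qed
  finally show ?thesis .
qed

lemma quotG_coset_subset_quot_iff:
  assumes rs: "length rs = n - 1" "set rs \<subseteq> R" and a: "a \<in> M"
  shows "quotG m f z N M g rs (coset m f z N a) \<subseteq> quot m f z N K \<longleftrightarrow> g rs a \<subseteq> K"
proof
  assume quotG_subset: "quotG m f z N M g rs (coset m f z N a) \<subseteq> quot m f z N K"
  show "g rs a \<subseteq> K"
  proof
    fix w assume w: "w \<in> g rs a"
    then have "coset m f z N w \<in> quot m f z N K"
      using quotG_subset a unfolding quotG_def by blast
    with w show "w \<in> K"
      using mem_of_coset_mem_quot smult_closed[OF rs a] by blast
  qed
next
  assume "g rs a \<subseteq> K"
  show "quotG m f z N M g rs (coset m f z N a) \<subseteq> quot m f z N K"
  proof
    fix Y assume "Y \<in> quotG m f z N M g rs (coset m f z N a)"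
    then obtain w a' where a': "a' \<in> M" "coset m f z N a = coset m f z N a'"
      and w: "w \<in> g rs a'" and Y: "Y = coset m f z N w"
      unfolding quotG_def by blast
    have "a' \<in> coset m f z N a"
      using mem_coset_self[OF a'(1)] unfolding a'(2) .
    then have "w \<in> K"
      using smult_subset_of_mem_coset[OF rs a \<open>g rs a \<subseteq> K\<close>] w by blast
    then show "Y \<in> quot m f z N K"
      unfolding Y quot_def by blast
  qed
qed

lemma quotF_subset_quot:
  assumes "length Xs = m" and "set Xs \<subseteq> quot m f z N K"
  shows "quotF m f z N M Xs \<subseteq> quot m f z N K"
proof
  fix Y assume "Y \<in> quotF m f z N M Xs"
  then obtain t as where as: "list_all2 (\<lambda>a X. a \<in> M \<and> X = coset m f z N a) as Xs"
    and t: "t \<in> f as" and Y: "Y = coset m f z N t"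
    unfolding quotF_def by blast
  have "set as \<subseteq> K"
    using list_all2_set_subset[OF as] assms(2) mem_of_coset_mem_quot by blast
  then have "t \<in> K"
    using hyperop_closed_K list_all2_lengthD[OF as] assms(1) t by blast
  then show "Y \<in> quot m f z N K"
    unfolding Y quot_def by blast
qed

lemma lift_quotF_update_quot:
  assumes Xs: "length Xs = m" "set Xs \<subseteq> quot m f z N K" and i: "i < m"
  shows "lift (quotF m f z N M) ((sing Xs)[i := quot m f z N K]) = quot m f z N K"
proof
  show "lift (quotF m f z N M) ((sing Xs)[i := quot m f z N K]) \<subseteq> quot m f z N K"
  proof (rule lift_subset_closed)
    show "length Ys = length ((sing Xs)[i := quot m f z N K]) \<Longrightarrow> set Ys \<subseteq> quot m f z N K
        \<Longrightarrow> quotF m f z N M Ys \<subseteq> quot m f z N K" for Ys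
      using quotF_subset_quot Xs(1) by (simp add: sing_def)
    show "\<forall>X\<in>set ((sing Xs)[i := quot m f z N K]). X \<subseteq> quot m f z N K"
      using Xs(2) set_update_subset_insert[of "sing Xs" i] by (auto simp: sing_def)
  qed
next
  txt \<open>Reproducibility of K/N is the image of that of K under the coset map.\<close>
  have "Xs \<in> lists (coset m f z N ` K)"
    using Xs(2) unfolding quot_def by (simp add: lists_eq_set)
  then obtain xs where xs: "Xs = map (coset m f z N) xs" "set xs \<subseteq> K"
    unfolding lists_image by (auto simp: lists_eq_set)
  have "quot m f z N K = coset m f z N ` lift f ((sing xs)[i := K])"
    using hyperop_reproductive_K[of xs i] xs Xs(1) i unfolding quot_def by simp
  also have "\<dots> \<subseteq> lift (quotF m f z N M) (map ((`) (coset m f z N)) ((sing xs)[i := K]))"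
    using xs(2) K_subset_M set_update_subset_insert[of "sing xs" i K]
    by (intro image_coset_lift_subset) (auto simp: sing_def)
  also have "map ((`) (coset m f z N)) ((sing xs)[i := K]) = (sing Xs)[i := quot m f z N K]"
    unfolding xs(1) by (simp add: sing_def quot_def map_update comp_def)
  finally show "quot m f z N K \<subseteq> lift (quotF m f z N M) ((sing Xs)[i := quot m f z N K])" .
qed

lemma quot_subhypermodule:
  "subhypermodule m n R (quot m f z N M) (quotF m f z N M) (quotG m f z N M g) (quot m f z N K)"
  unfolding subhypermodule_def subhypergroup_def
proof (intro conjI allI impI)
  show "quot m f z N K \<noteq> {}"
    using subhypermodule_zero_mem[OF K] unfolding quot_def by blast
  show "quot m f z N K \<subseteq> quot m f z N M"
    using K_subset_M unfolding quot_def by blast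
  show "quotF m f z N M Xs \<subseteq> quot m f z N K"
    if "length Xs = m \<and> set Xs \<subseteq> quot m f z N K" for Xs
    using quotF_subset_quot that by blast
  show "lift (quotF m f z N M) ((sing Xs)[i := quot m f z N K]) = quot m f z N K"
    if "length Xs = m \<and> set Xs \<subseteq> quot m f z N K \<and> i < m" for Xs i
    using lift_quotF_update_quot that by blast
  show "quotG m f z N M g rs X \<subseteq> quot m f z N K"
    if rs_X: "length rs = n - 1 \<and> set rs \<subseteq> R \<and> X \<in> quot m f z N K" for rs X
  proof -
    obtain q where "q \<in> K" and X: "X = coset m f z N q"
      using rs_X unfolding quot_def by blast
    then show ?thesis
      using quotG_coset_subset_quot_iff smult_closed_K K_subset_M rs_X by blast
  qed
qed

lemma coset_mem_phiN:
  assumes "w \<in> phi K" and "w \<in> M"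
  shows "coset m f z N w \<in> phiN m f z N phi (quot m f z N K)"
  using canonical_hypergroup_mem_lift_coset[OF canonical_hypergroup assms zero_mem_N] assms(1)
  unfolding phiN_def Union_quot unfolding quot_def by auto

lemma smult_subset_diff_of_quotG_subset_diff:
  assumes rs: "length rs = n - 1" "set rs \<subseteq> R" and a: "a \<in> M"
    and quotG_subset:
      "quotG m f z N M g rs (coset m f z N a) \<subseteq> quot m f z N K - phiN m f z N phi (quot m f z N K)"
  shows "g rs a \<subseteq> K - phi K"
proof -
  have "g rs a \<subseteq> K"
    using quotG_subset quotG_coset_subset_quot_iff[OF rs a] by blast
  moreover have "w \<notin> phi K" if w: "w \<in> g rs a" for w
  proof
    assume "w \<in> phi K"
    then have "coset m f z N w \<in> phiN m f z N phi (quot m f z N K)"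
      using coset_mem_phiN smult_closed[OF rs a] w by blast
    moreover have "coset m f z N w \<in> quotG m f z N M g rs (coset m f z N a)"
      using a w unfolding quotG_def by blast
    ultimately show False
      using quotG_subset by blast
  qed
  ultimately show ?thesis by blast
qed

end

end

theorem mainTheorem10:
  fixes R :: "'r set" and f' :: "'r list \<Rightarrow> 'r set" and g' :: "'r list \<Rightarrow> 'r"
    and z' one :: 'r
    and M :: "'a set" and f :: "'a list \<Rightarrow> 'a set" and g :: "'r list \<Rightarrow> 'a \<Rightarrow> 'a set"
    and z :: 'a and m n :: nat
    and N Q :: "'a set" and phi :: "'a set \<Rightarrow> 'a set"
  assumes "hypermodule m n R f' g' z' one M f g z"
    and "subhypermodule m n R M f g N" and "N \<noteq> M"
    and "subhypermodule m n R M f g Q" and "Q \<noteq> M"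
    and "N \<subseteq> Q"
    and "\<forall>K. subhypermodule m n R M f g K \<longrightarrow>
            phi K = {} \<or> subhypermodule m n R M f g (phi K)"
    and "classical_prime m n R one M f g phi Q"
  shows "classical_prime m n R one (quot m f z N M) (quotF m f z N M) (quotG m f z N M g)
           (phiN m f z N phi) (quot m f z N Q)"
proof -
  interpret mn_hypermodule_quotient m n R f' g' z' one M f g z N
    using assms(1,2) by unfold_locales
  note Q = assms(4,6)
  show ?thesis
    unfolding classical_prime_def
  proof (intro conjI allI impI)
    show "subhypermodule m n R (quot m f z N M) (quotF m f z N M) (quotG m f z N M g) (quot m f z N Q)"
      using quot_subhypermodule[OF Q] .
    show "quot m f z N Q \<noteq> quot m f z N M"
      using quot_neq_quot_carrier[OF Q assms(5)] .
    fix rs X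
    assume rs_X: "length rs = n - 1 \<and> set rs \<subseteq> R \<and> X \<in> quot m f z N M \<and>
      quotG m f z N M g rs X \<subseteq> quot m f z N Q - phiN m f z N phi (quot m f z N Q)"
    then obtain a where a: "a \<in> M" and X: "X = coset m f z N a"
      unfolding quot_def by blast
    then have "g rs a \<subseteq> Q - phi Q"
      using smult_subset_diff_of_quotG_subset_diff[OF Q] rs_X by blast
    then obtain i where i: "i < n - 1" and "g (rs ! i # replicate (n - 2) one) a \<subseteq> Q"
      using assms(8) a rs_X unfolding classical_prime_def by blast
    moreover have "length (rs ! i # replicate (n - 2) one) = n - 1"
      and "set (rs ! i # replicate (n - 2) one) \<subseteq> R"
      using i rs_X arity_ge_2 one_mem by auto
    ultimately show "\<exists>i<n - 1. quotG m f z N M g (rs ! i # replicate (n - 2) one) X \<subseteq> quot m f z N Q"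
      using i quotG_coset_subset_quot_iff[OF Q _ _ a] X by blast
  qed
qed

end
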